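(* Let $V$ be a finite set of variables, let $x,y,a,b\in V$ with $x\ne y$, $a\ne b$, let $\mathbf Z\subseteq V\setminus\{x,y\}$, $\mathbf X\subseteq V\setminus\{a,b\}$, let $\sigma\in\{\text{preferred},\text{stable}\}$, and let $D^{xy\mathbf Z}_{\mathit{csl}}$ be the extended causal ABA framework defined in the context. For every $S\in\sigma(D^{xy\mathbf Z}_{\mathit{csl}})$: $(a\perp\!\!\!\perp b\mid\mathbf X)\in S$ if and only if $a$ and $b$ are d-separated given $\mathbf X$ in $G(S)=(V,\{(u,v)\mid\mathit{arr}_{uv}\in S\})$.
   Context: ABA. An ABA framework is $D=(\mathcal L,\mathcal R,\mathcal A,\overline{\cdot})$ with sentences $\mathcal L$, rules $a_0\leftarrow a_1,\dots,a_n$ ($n\ge0$), assumptions $\mathcal A\subseteq\mathcal L$ and contrary function $\overline{\cdot}:\mathcal A\to\mathcal L$. $S\vdash q$ ($S\subseteq\mathcal A$) if there is a finite rooted labelled tree with root $q$, set of leaf labels $S$ or $S\cup\{\top\}$, and every inner node labelled by the head of a rule whose children are labelled by the distinct body elements (one child $\top$ for an empty body). $S$ attacks $T$ if some $S'\subseteq S$ derives $\overline a$ for some $a\in T$. $S$ is closed if $S\vdash a$ with $a\in\mathcal A$ implies $a\in S$. Conflict-free: does not attack itself; $S$ defends $T$ if it attacks every attacker of $T$; admissible: conflict-free and self-defending; complete: admissible and contains every assumption set it defends; preferred: $\subseteq$-maximal complete; stable: admissible and attacks $\{a\}$ for every assumption $a\notin S$. Since the framework below is non-flat, extensions are required to be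 closed. Graphs. A path is a sequence of distinct nodes with consecutive nodes adjacent; an inner node $x_i$ of $x_1\dots x_n$ is a collider if $(x_{i-1},x_i)$ and $(x_{i+1},x_i)$ are edges; descendants are nodes reachable by directed paths. For $\mathbf Z\subseteq V\setminus\{x,y\}$, an $x$-$y$-path is $\mathbf Z$-active if every collider on it is in $\mathbf Z$ or has a descendant in $\mathbf Z$ and every other node on it is not in $\mathbf Z$; $x,y$ are d-separated given $\mathbf Z$ if no $\mathbf Z$-active $x$-$y$-path exists. An $x$-$y$-collider-tree of a DAG $H$ is a subgraph $t$ of $H$ with an $x$-$y$-path $p_t$ in $t$ such that every node of $t$ not on $p_t$ is a descendant of a collider of $p_t$; it is $\mathbf Z$-active if $p_t$ is $\mathbf Z$-active in $(V,\text{edges of }t)$. By an $x$-$y$-path over $V$ (without reference to a graph) we mean a sequence of distinct variables from $x$ to $y$. The framework $D_{\mathit{ds}}$. Assumptions: $\mathit{arr}_{uv}$ for all ordered pairs of distinct $u,v\in V$; one $\mathit{noe}_{uv}=\mathit{noe}_{vu}$ per unordered pair; independence assumptions $(u\perp\!\!\!\perp v\mid\mathbf W)$ for $\mathbf W\subseteq V$, distinct $u,v\in V\setminus\mathbf W$ (symmetric in $u,v$). Each assumption $a$ has its own distinct fresh contrary $\overline a$. Rules: (i) $\overline a\leftarrow b$ for distinct $a,b\in\{\mathit{arr}_{uv},\mathit{arr}_{vu},\mathit{noe}_{uv}\}$; (ii) for every sequence $x_1\dots x_k$ with consecutive elements distinct and $x_1=x_k$ and every $1\le i<k$: $\overline{\mathit{arr}_{x_ix_{i+1}}}\leftarrow\mathit{arr}_{x_1x_2},\dots,\mathit{arr}_{x_{k-1}x_k}$;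 (iii) $\mathit{dpath}_{uv}\leftarrow\mathit{arr}_{uv}$; $\mathit{dpath}_{uw}\leftarrow\mathit{dpath}_{uv},\mathit{arr}_{vw}$; $e_{uv}\leftarrow\mathit{arr}_{uv}$; $e_{uv}\leftarrow\mathit{arr}_{vu}$; $\overline{\mathit{noe}_{uv}}\leftarrow e_{uv}$; (iv) for all distinct $u,v$, $\mathbf W\subseteq V\setminus\{u,v\}$ and every $\mathbf W$-active $u$-$v$-collider-tree $t$ (of any DAG on $V$), $\overline{(u\perp\!\!\!\perp v\mid\mathbf W)}\leftarrow\{\mathit{arr}_{st}\mid(s,t)\text{ an edge of }t\}$. The framework $D^{xy\mathbf Z}_{\mathit{csl}}$. Its assumptions are those of $D_{\mathit{ds}}$ together with assumptions $\mathit{bp}_{p\mid\mathbf W}$ for every $u$-$v$-path $p$ over $V$ and every $\mathbf W\subseteq V\setminus\{u,v\}$, with contrary $\overline{\mathit{bp}_{p\mid\mathbf W}}=\mathit{ap}_{p\mid\mathbf W}$. Its rules are those of $D_{\mathit{ds}}$ plus: (a) $(x\perp\!\!\!\perp y\mid\mathbf Z)\leftarrow\mathit{bp}_{p_1\mid\mathbf Z},\dots,\mathit{bp}_{p_k\mid\mathbf Z}$ where $p_1,\dots,p_k$ are all $x$-$y$-paths over $V$; (b) for every $\mathbf Z$-active $x$-$y$-collider-tree $t$ (of any DAG on $V$) with underlying path $p_t$, the rule $\mathit{ap}_{p_t\mid\mathbf Z}\leftarrow\{\mathit{arr}_{st}\mid(s,t)\text{ an edge of }t\}$; (c) the fact $\overline{(x\perp\!\!\!\perp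 y\mid\mathbf Z)}\leftarrow$ (empty body). *)

theory Defs
  imports Main
begin

text \<open>A framework is given by a rule set R (pairs head/body), an assumption set A and a
contrary function ctr.  derives R A S q holds iff there is a derivation tree with root q
whose set of assumption leaves is exactly S (children of a rule node are labelled by the
distinct body elements; an empty body gives a single top leaf, contributing nothing to S).\<close>

inductive derives :: "('s \<times> 's set) set \<Rightarrow> 's set \<Rightarrow> 's set \<Rightarrow> 's \<Rightarrow> bool"
  for R :: "('s \<times> 's set) set" and A :: "'s set" where
  leaf: "a \<in> A \<Longrightarrow> derives R A {a} a"
| rule: "\<lbrakk>(h, B) \<in> R; finite B; \<forall>b\<in>B. derives R A (f b) b\<rbrakk>
          \<Longrightarrow> derives R A (\<Union>b\<in>B. f b) h"

definition attacks :: "('s \<times> 's set) set \<Rightarrow> 's set \<Rightarrow> ('s \<Rightarrow> 's) \<Rightarrow> 's set \<Rightarrow> 's set \<Rightarrow> bool" where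
  "attacks R A ctr S T \<longleftrightarrow> (\<exists>S'\<subseteq>S. \<exists>a\<in>T. derives R A S' (ctr a))"

definition closed_set :: "('s \<times> 's set) set \<Rightarrow> 's set \<Rightarrow> 's set \<Rightarrow> bool" where
  "closed_set R A S \<longleftrightarrow> (\<forall>S'\<subseteq>S. \<forall>a\<in>A. derives R A S' a \<longrightarrow> a \<in> S)"

definition conflict_free :: "('s \<times> 's set) set \<Rightarrow> 's set \<Rightarrow> ('s \<Rightarrow> 's) \<Rightarrow> 's set \<Rightarrow> bool" where
  "conflict_free R A ctr S \<longleftrightarrow> \<not> attacks R A ctr S S"

definition defends :: "('s \<times> 's set) set \<Rightarrow> 's set \<Rightarrow> ('s \<Rightarrow> 's) \<Rightarrow> 's set \<Rightarrow> 's set \<Rightarrow> bool" where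
  "defends R A ctr S T \<longleftrightarrow> (\<forall>U\<subseteq>A. attacks R A ctr U T \<longrightarrow> attacks R A ctr S U)"

definition admissible :: "('s \<times> 's set) set \<Rightarrow> 's set \<Rightarrow> ('s \<Rightarrow> 's) \<Rightarrow> 's set \<Rightarrow> bool" where
  "admissible R A ctr S \<longleftrightarrow> S \<subseteq> A \<and> conflict_free R A ctr S \<and> defends R A ctr S S"

definition complete_ext :: "('s \<times> 's set) set \<Rightarrow> 's set \<Rightarrow> ('s \<Rightarrow> 's) \<Rightarrow> 's set \<Rightarrow> bool" where
  "complete_ext R A ctr S \<longleftrightarrow> admissible R A ctr S \<and> (\<forall>T\<subseteq>A. defends R A ctr S T \<longrightarrow> T \<subseteq> S)"

text \<open>Non-flat framework: extensions are required to be closed.\<close>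

definition preferred_ext :: "('s \<times> 's set) set \<Rightarrow> 's set \<Rightarrow> ('s \<Rightarrow> 's) \<Rightarrow> 's set \<Rightarrow> bool" where
  "preferred_ext R A ctr S \<longleftrightarrow> closed_set R A S \<and> complete_ext R A ctr S \<and>
     \<not> (\<exists>S'. closed_set R A S' \<and> complete_ext R A ctr S' \<and> S \<subset> S')"

definition stable_ext :: "('s \<times> 's set) set \<Rightarrow> 's set \<Rightarrow> ('s \<Rightarrow> 's) \<Rightarrow> 's set \<Rightarrow> bool" where
  "stable_ext R A ctr S \<longleftrightarrow> closed_set R A S \<and> admissible R A ctr S \<and>
     (\<forall>a\<in>A - S. attacks R A ctr S {a})"

datatype semantics = Preferred | Stable

definition extensions :: "semantics \<Rightarrow> ('s \<times> 's set) set \<Rightarrow> 's set \<Rightarrow> ('s \<Rightarrow> 's) \<Rightarrow> 's set set" where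
  "extensions \<sigma> R A ctr = {S. case \<sigma> of Preferred \<Rightarrow> preferred_ext R A ctr S
                                       | Stable \<Rightarrow> stable_ext R A ctr S}"

definition adj :: "('v \<times> 'v) set \<Rightarrow> 'v \<Rightarrow> 'v \<Rightarrow> bool" where
  "adj E u v \<longleftrightarrow> (u, v) \<in> E \<or> (v, u) \<in> E"

definition is_path :: "('v \<times> 'v) set \<Rightarrow> 'v list \<Rightarrow> 'v \<Rightarrow> 'v \<Rightarrow> bool" where
  "is_path E p x y \<longleftrightarrow> p \<noteq> [] \<and> hd p = x \<and> last p = y \<and> distinct p \<and>
     (\<forall>i. Suc i < length p \<longrightarrow> adj E (p ! i) (p ! Suc i))"

definition collider :: "('v \<times> 'v) set \<Rightarrow> 'v list \<Rightarrow> nat \<Rightarrow> bool" where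
  "collider E p i \<longleftrightarrow> 0 < i \<and> Suc i < length p \<and>
     (p ! (i - 1), p ! i) \<in> E \<and> (p ! Suc i, p ! i) \<in> E"

definition active :: "('v \<times> 'v) set \<Rightarrow> 'v list \<Rightarrow> 'v set \<Rightarrow> bool" where
  "active E p Z \<longleftrightarrow> (\<forall>i < length p.
      (collider E p i \<longrightarrow> (p ! i \<in> Z \<or> (\<exists>d\<in>Z. (p ! i, d) \<in> E\<^sup>+))) \<and>
      (\<not> collider E p i \<longrightarrow> p ! i \<notin> Z))"

definition d_separated :: "('v \<times> 'v) set \<Rightarrow> 'v \<Rightarrow> 'v \<Rightarrow> 'v set \<Rightarrow> bool" where
  "d_separated E x y Z \<longleftrightarrow> \<not> (\<exists>p. is_path E p x y \<and> active E p Z)"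

text \<open>An x-y-collider-tree (edge set T, underlying path p) of some DAG H on V;
  nodes of T are the endpoints of its edges; descendants are taken in T.\<close>
definition collider_tree :: "'v set \<Rightarrow> ('v \<times> 'v) set \<Rightarrow> 'v list \<Rightarrow> 'v \<Rightarrow> 'v \<Rightarrow> bool" where
  "collider_tree V T p x y \<longleftrightarrow>
     (\<exists>H. H \<subseteq> V \<times> V \<and> acyclic H \<and> T \<subseteq> H) \<and> is_path T p x y \<and>
     (\<forall>n \<in> Field T. n \<notin> set p \<longrightarrow> (\<exists>i. collider T p i \<and> (p ! i, n) \<in> T\<^sup>+))"

definition active_collider_tree :: "'v set \<Rightarrow> ('v \<times> 'v) set \<Rightarrow> 'v list \<Rightarrow> 'v \<Rightarrow> 'v \<Rightarrow> 'v set \<Rightarrow> bool" where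
  "active_collider_tree V T p x y Z \<longleftrightarrow> collider_tree V T p x y \<and> active T p Z"

definition vpath :: "'v set \<Rightarrow> 'v list \<Rightarrow> 'v \<Rightarrow> 'v \<Rightarrow> bool" where
  "vpath V p x y \<longleftrightarrow> p \<noteq> [] \<and> hd p = x \<and> last p = y \<and> distinct p \<and> set p \<subseteq> V"

text \<open>Sentences. Noe and Indep use sets for the unordered pair, so that
  noe_uv = noe_vu and (u indep v | W) = (v indep u | W). Ctr a is the fresh contrary of a.\<close>
datatype 'v sent =
    Arr 'v 'v
  | Noe "'v set"
  | Indep "'v set" "'v set"
  | Bp "'v list" "'v set"
  | Ap "'v list" "'v set"
  | Dpath 'v 'v
  | Ed 'v 'v
  | Ctr "'v sent"

fun ctr :: "'v sent \<Rightarrow> 'v sent" where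
  "ctr (Bp p W) = Ap p W"
| "ctr a = Ctr a"

definition arr_body :: "('v \<times> 'v) set \<Rightarrow> 'v sent set" where
  "arr_body T = {Arr s t | s t. (s, t) \<in> T}"

definition cyc_body :: "'v list \<Rightarrow> 'v sent set" where
  "cyc_body xs = {Arr (xs ! j) (xs ! Suc j) | j. Suc j < length xs}"

definition asm_ds :: "'v set \<Rightarrow> 'v sent set" where
  "asm_ds V = {Arr u v | u v. u \<in> V \<and> v \<in> V \<and> u \<noteq> v}
     \<union> {Noe {u, v} | u v. u \<in> V \<and> v \<in> V \<and> u \<noteq> v}
     \<union> {Indep {u, v} W | u v W. u \<in> V \<and> v \<in> V \<and> u \<noteq> v \<and> W \<subseteq> V - {u, v}}"

definition rules_ds :: "'v set \<Rightarrow> ('v sent \<times> 'v sent set) set" where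
  "rules_ds V =
     {(ctr a, {b}) | a b u v. u \<in> V \<and> v \<in> V \<and> u \<noteq> v \<and>
         a \<in> {Arr u v, Arr v u, Noe {u, v}} \<and> b \<in> {Arr u v, Arr v u, Noe {u, v}} \<and> a \<noteq> b}
   \<union> {(ctr (Arr (xs ! i) (xs ! Suc i)), cyc_body xs) | xs i.
         2 \<le> length xs \<and> set xs \<subseteq> V \<and> hd xs = last xs \<and>
         (\<forall>j. Suc j < length xs \<longrightarrow> xs ! j \<noteq> xs ! Suc j) \<and> Suc i < length xs}
   \<union> {(Dpath u v, {Arr u v}) | u v. u \<in> V \<and> v \<in> V \<and> u \<noteq> v}
   \<union> {(Dpath u w, {Dpath u v, Arr v w}) | u v w.
         u \<in> V \<and> v \<in> V \<and> w \<in> V \<and> u \<noteq> v \<and> v \<noteq> w}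
   \<union> {(Ed u v, {Arr u v}) | u v. u \<in> V \<and> v \<in> V \<and> u \<noteq> v}
   \<union> {(Ed u v, {Arr v u}) | u v. u \<in> V \<and> v \<in> V \<and> u \<noteq> v}
   \<union> {(ctr (Noe {u, v}), {Ed u v}) | u v. u \<in> V \<and> v \<in> V \<and> u \<noteq> v}
   \<union> {(ctr (Indep {u, v} W), arr_body T) | u v W T p.
         u \<in> V \<and> v \<in> V \<and> u \<noteq> v \<and> W \<subseteq> V - {u, v} \<and> active_collider_tree V T p u v W}"

definition asm_csl :: "'v set \<Rightarrow> 'v sent set" where
  "asm_csl V = asm_ds V \<union>
     {Bp p W | p u v W. u \<in> V \<and> v \<in> V \<and> u \<noteq> v \<and> vpath V p u v \<and> W \<subseteq> V - {u, v}}"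

definition rules_csl :: "'v set \<Rightarrow> 'v \<Rightarrow> 'v \<Rightarrow> 'v set \<Rightarrow> ('v sent \<times> 'v sent set) set" where
  "rules_csl V x y Z = rules_ds V
     \<union> {(Indep {x, y} Z, {Bp p Z | p. vpath V p x y})}
     \<union> {(Ap p Z, arr_body T) | T p. active_collider_tree V T p x y Z}
     \<union> {(ctr (Indep {x, y} Z), {})}"

definition graph_of :: "'v set \<Rightarrow> 'v sent set \<Rightarrow> ('v \<times> 'v) set" where
  "graph_of V S = {(u, v). u \<in> V \<and> v \<in> V \<and> Arr u v \<in> S}"

end

theory Submission
  imports Defs
begin

text \<open>
  A stable extension S is conflict-free, hence its graph G(S) is acyclic: the arrows of a directed
  cycle derive the contrary of each of them. Since S attacks every assumption it omits,
  Indep {a, b} X is missing from S iff S derives its contrary. Apart from the fact rule for x, y, Z,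
  that contrary is derived only from the arrows of an active a-b collider tree given X, and such
  arrows lie in S iff a and b are d-connected given X in G(S). The fact rule attacks Indep {x, y} Z
  unconditionally; closedness then leaves some bp assumption outside S, and the attack of S on it
  again comes from an active x-y collider tree given Z.

  Preferred extensions are stable. A complete extension S misses some bp assumption for an x-y
  path p; an attacker that S cannot counter-attack consists of the arrows of an active collider
  tree T on p, and defence makes G(S) together with T a DAG G in which x and y are d-connected
  given Z. The assumptions not attacked by the arrows of G and the noe assumptions of its
  non-adjacent pairs form a stable extension containing S, so a preferred S coincides with it.
\<close>

section \<open>Walks, paths and d-separation\<close>

definition walk :: "('v \<times> 'v) set \<Rightarrow> 'v list \<Rightarrow> bool" where
  "walk E xs \<longleftrightarrow> 2 \<le> length xs \<and> (\<forall>j. Suc j < length xs \<longrightarrow> (xs ! j, xs ! Suc j) \<in> E)"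

lemma walk_imp_trancl:
  assumes "walk E xs"
  shows "(hd xs, last xs) \<in> E\<^sup>+"
proof -
  have "xs \<noteq> []" and pos: "0 < length xs - 1" using assms by (auto simp: walk_def)
  then have "(hd xs, last xs) \<in> E ^^ (length xs - 1)"
    using assms unfolding relpow_fun_conv walk_def
    by (intro exI[of _ "(!) xs"]) (auto simp: hd_conv_nth last_conv_nth)
  then show ?thesis using pos trancl_power by blast
qed

lemma trancl_imp_walk:
  assumes "(a, b) \<in> E\<^sup>+"
  obtains xs where "walk E xs" "hd xs = a" "last xs = b"
proof -
  obtain n f where "0 < n" "f 0 = a" "f n = b" "\<forall>i<n. (f i, f (Suc i)) \<in> E"
    using assms unfolding trancl_power relpow_fun_conv by blast
  then show ?thesis
    by (intro that[of "map f [0..<Suc n]"])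
      (auto simp: walk_def hd_map last_map simp del: upt_Suc)
qed

lemma walk_set_subset_Field: "walk E xs \<Longrightarrow> set xs \<subseteq> Field E"
proof
  fix z assume w: "walk E xs" and "z \<in> set xs"
  then obtain k where k: "k < length xs" "xs ! k = z" by (auto simp: in_set_conv_nth)
  show "z \<in> Field E"
  proof (cases "Suc k < length xs")
    case True
    then show ?thesis using w k by (auto simp: walk_def intro: FieldI1)
  next
    case False
    then have "Suc (k - 1) = k" using k w by (auto simp: walk_def)
    then have "(xs ! (k - 1), xs ! k) \<in> E" using w k by (metis walk_def)
    then show ?thesis using k by (auto intro: FieldI2)
  qed
qed

lemma acyclic_asym: "acyclic E \<Longrightarrow> (a, b) \<in> E \<Longrightarrow> (b, a) \<notin> E"
  by (meson acyclic_def r_into_trancl' trancl_into_trancl)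

lemma is_path_mono: "E \<subseteq> E' \<Longrightarrow> is_path E p u v \<Longrightarrow> is_path E' p u v"
  unfolding is_path_def adj_def by blast

lemma is_path_imp_walk:
  assumes "is_path E p u v" "u \<noteq> v"
  shows "walk (E \<union> E\<inverse>) p"
proof -
  have "2 \<le> length p" using assms by (cases p; cases "tl p") (auto simp: is_path_def)
  then show ?thesis
    using assms unfolding is_path_def walk_def adj_def by auto
qed

lemma is_path_set_subset_Field: "is_path E p u v \<Longrightarrow> u \<noteq> v \<Longrightarrow> set p \<subseteq> Field E"
  using walk_set_subset_Field[OF is_path_imp_walk] by fastforce

lemma collider_mono_iff:
  assumes "E \<subseteq> E'" "acyclic E'" "is_path E p u v"
  shows "collider E' p i \<longleftrightarrow> collider E p i"
proof
  assume c: "collider E' p i"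
  then have i: "0 < i" "Suc i < length p" by (auto simp: collider_def)
  have "adj E (p ! (i - 1)) (p ! i)" "adj E (p ! i) (p ! Suc i)"
    using assms(3) i unfolding is_path_def by (metis Suc_diff_1 Suc_lessD)+
  then show "collider E p i"
    using c assms(1) acyclic_asym[OF assms(2)] unfolding collider_def adj_def by blast
next
  assume "collider E p i"
  then show "collider E' p i" using assms(1) unfolding collider_def by blast
qed

lemma active_mono:
  assumes "E \<subseteq> E'" "acyclic E'" "is_path E p u v" "active E p W"
  shows "active E' p W"
  using assms(4) collider_mono_iff[OF assms(1-3)] trancl_mono[OF _ assms(1)]
  unfolding active_def by blast

lemma collider_rev:
  assumes "i < length p"
  shows "collider E (rev p) i \<longleftrightarrow> collider E p (length p - Suc i)"
proof (cases "0 < i \<and> Suc i < length p")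
  case True
  then obtain j where j: "i = Suc j" by (cases i) auto
  have "rev p ! (i - 1) = p ! Suc (length p - Suc i)"
    using True by (simp add: j rev_nth Suc_diff_Suc)
  moreover have "rev p ! Suc i = p ! (length p - Suc i - 1)"
    using True by (simp add: rev_nth)
  ultimately show ?thesis
    using True assms unfolding collider_def by (auto simp: rev_nth)
next
  case False
  then show ?thesis using assms unfolding collider_def by auto
qed

lemma is_path_rev:
  assumes "is_path E p u v"
  shows "is_path E (rev p) v u"
  unfolding is_path_def
proof (intro conjI allI impI)
  show "rev p \<noteq> []" "hd (rev p) = v" "last (rev p) = u" "distinct (rev p)"
    using assms unfolding is_path_def by (auto simp: hd_rev last_rev)
  fix i assume i: "Suc i < length (rev p)"
  define k where "k = length p - Suc (Suc i)"
  have k: "Suc k < length p" "rev p ! i = p ! Suc k" "rev p ! Suc i = p ! k"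
    using i unfolding k_def by (auto simp: rev_nth Suc_diff_Suc)
  then show "adj E (rev p ! i) (rev p ! Suc i)"
    using assms unfolding is_path_def adj_def by auto
qed

lemma active_rev: "active E p W \<Longrightarrow> active E (rev p) W"
  unfolding active_def by (auto simp: collider_rev rev_nth)

lemma d_separated_commute: "d_separated E a b W \<longleftrightarrow> d_separated E b a W"
  unfolding d_separated_def by (metis active_rev is_path_rev rev_rev_ident)

lemma d_separated_doubleton:
  "{u, v} = {a, b} \<Longrightarrow> d_separated E u v W \<longleftrightarrow> d_separated E a b W"
  by (metis doubleton_eq_iff d_separated_commute)

definition edges_between :: "('v \<times> 'v) set \<Rightarrow> 'v set \<Rightarrow> 'v set \<Rightarrow> ('v \<times> 'v) set" where
  "edges_between E C W = {(s, t) \<in> E. \<exists>c\<in>C. \<exists>d\<in>W. (c, s) \<in> E\<^sup>* \<and> (t, d) \<in> E\<^sup>*}"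

lemma rtrancl_edges_between:
  assumes "c \<in> C" "d \<in> W" "(c, s) \<in> E\<^sup>*" "(s, d) \<in> E\<^sup>*"
  shows "(c, s) \<in> (edges_between E C W)\<^sup>*"
  using assms(3,4)
proof (induction rule: rtrancl_induct)
  case base
  then show ?case by simp
next
  case (step s1 s2)
  then have "(s1, d) \<in> E\<^sup>*" by (meson converse_rtrancl_into_rtrancl)
  then show ?case
    using step assms(1,2) unfolding edges_between_def by (blast intro: rtrancl_into_rtrancl)
qed

lemma trancl_edges_between:
  assumes "c \<in> C" "d \<in> W" "(c, d) \<in> E\<^sup>+"
  shows "(c, d) \<in> (edges_between E C W)\<^sup>+"
proof -
  obtain s where cs: "(c, s) \<in> E\<^sup>*" and sd: "(s, d) \<in> E" using assms(3) by (metis tranclD2)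
  have "(c, s) \<in> (edges_between E C W)\<^sup>*"
    using rtrancl_edges_between[OF assms(1,2) cs r_into_rtrancl[OF sd]] .
  moreover have "(s, d) \<in> edges_between E C W"
    using assms(1,2) cs sd unfolding edges_between_def by blast
  ultimately show ?thesis by (rule rtrancl_into_trancl1)
qed

lemma edges_between_reachable:
  assumes "n \<in> Field (edges_between E C W)" "n \<notin> C"
  shows "\<exists>c\<in>C. (c, n) \<in> (edges_between E C W)\<^sup>+"
proof -
  let ?D = "edges_between E C W"
  have reach: "\<exists>c\<in>C. (c, s) \<in> ?D\<^sup>* \<and> (c, t) \<in> ?D\<^sup>+" if st: "(s, t) \<in> ?D" for s t
  proof -
    obtain c d where cd: "c \<in> C" "d \<in> W" "(c, s) \<in> E\<^sup>*" "(t, d) \<in> E\<^sup>*" "(s, t) \<in> E"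
      using st unfolding edges_between_def by blast
    have "(s, d) \<in> E\<^sup>*" using converse_rtrancl_into_rtrancl[OF cd(5,4)] .
    then have "(c, s) \<in> ?D\<^sup>*" using rtrancl_edges_between[OF cd(1-3)] by blast
    then show ?thesis using cd(1) rtrancl_into_trancl1[OF _ st] by blast
  qed
  obtain m where "(n, m) \<in> ?D \<or> (m, n) \<in> ?D" using assms(1) unfolding Field_iff by blast
  then show ?thesis
  proof
    assume "(n, m) \<in> ?D"
    then obtain c where "c \<in> C" "(c, n) \<in> ?D\<^sup>*" using reach by blast
    moreover have "c \<noteq> n" using \<open>c \<in> C\<close> assms(2) by blast
    ultimately show ?thesis using rtranclD by metis
  next
    assume "(m, n) \<in> ?D"
    then show ?thesis using reach by blast
  qed
qed

lemma active_path_imp_active_collider_tree: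
  assumes acy: "acyclic E" and EV: "E \<subseteq> V \<times> V"
    and path: "is_path E p u v" and act: "active E p W"
  obtains T where "T \<subseteq> E" "active_collider_tree V T p u v W"
proof -
  define C where "C = {p ! i | i. collider E p i}"
  define D where "D = edges_between E C W"
  define T where "T = (E \<inter> set p \<times> set p) \<union> D"
  have TE: "T \<subseteq> E" unfolding T_def D_def edges_between_def by blast
  have "adj T (p ! i) (p ! Suc i)" if "Suc i < length p" for i
  proof -
    have "adj E (p ! i) (p ! Suc i)" using path that unfolding is_path_def by blast
    moreover have "p ! i \<in> set p" "p ! Suc i \<in> set p" using that by auto
    ultimately show ?thesis unfolding adj_def T_def by blast
  qed
  then have pathT: "is_path T p u v" using path unfolding is_path_def by blast
  have colliderT: "collider T p i \<longleftrightarrow> collider E p i" for i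
    using collider_mono_iff[OF TE acy pathT] by simp
  have DT: "D\<^sup>+ \<subseteq> T\<^sup>+" unfolding T_def by (auto intro: trancl_mono)
  have "active T p W"
    unfolding active_def
  proof (intro allI impI conjI)
    fix i assume i: "i < length p" "collider T p i"
    then have "p ! i \<in> C" using colliderT unfolding C_def by blast
    show "p ! i \<in> W \<or> (\<exists>d\<in>W. (p ! i, d) \<in> T\<^sup>+)"
    proof (cases "p ! i \<in> W")
      case False
      then obtain d where "d \<in> W" "(p ! i, d) \<in> E\<^sup>+"
        using act i colliderT unfolding active_def by blast
      then have "(p ! i, d) \<in> D\<^sup>+"
        using trancl_edges_between[OF \<open>p ! i \<in> C\<close>] unfolding D_def by blast
      then show ?thesis using \<open>d \<in> W\<close> DT by blast
    qed simp
  next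
    fix i assume "i < length p" "\<not> collider T p i"
    then show "p ! i \<notin> W" using act colliderT unfolding active_def by blast
  qed
  moreover have "\<exists>i. collider T p i \<and> (p ! i, n) \<in> T\<^sup>+" if n: "n \<in> Field T" "n \<notin> set p" for n
  proof -
    have "C \<subseteq> set p"
    proof
      fix c assume "c \<in> C"
      then obtain i where "c = p ! i" "collider E p i" unfolding C_def by blast
      then show "c \<in> set p" unfolding collider_def by simp
    qed
    then have "n \<notin> C" using n(2) by blast
    have "Field (E \<inter> set p \<times> set p) \<subseteq> set p" unfolding Field_def by blast
    then have "n \<in> Field D" using n unfolding T_def Field_Un by blast
    then obtain c where "c \<in> C" "(c, n) \<in> D\<^sup>+"
      using edges_between_reachable[of n E C W] \<open>n \<notin> C\<close> unfolding D_def by blast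
    moreover obtain i where "c = p ! i" "collider E p i"
      using \<open>c \<in> C\<close> unfolding C_def by blast
    ultimately show ?thesis using colliderT DT by blast
  qed
  ultimately have "collider_tree V T p u v"
    unfolding collider_tree_def using acy EV TE pathT by blast
  with \<open>active T p W\<close> have "active_collider_tree V T p u v W"
    unfolding active_collider_tree_def by blast
  with TE show ?thesis by (rule that)
qed

lemma active_collider_tree_imp_active_path:
  assumes "active_collider_tree V T p u v W" "T \<subseteq> E" "acyclic E"
  shows "is_path E p u v" "active E p W"
proof -
  have path: "is_path T p u v" and act: "active T p W"
    using assms(1) unfolding active_collider_tree_def collider_tree_def by blast+
  show "is_path E p u v" using is_path_mono[OF assms(2) path] .
  show "active E p W" using active_mono[OF assms(2,3) path act] .
qed

lemma d_connected_iff_active_collider_tree: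
  assumes "acyclic E" "E \<subseteq> V \<times> V"
  shows "\<not> d_separated E u v W \<longleftrightarrow> (\<exists>T p. T \<subseteq> E \<and> active_collider_tree V T p u v W)"
proof
  assume "\<not> d_separated E u v W"
  then obtain p where path: "is_path E p u v" and act: "active E p W"
    unfolding d_separated_def by blast
  obtain T where "T \<subseteq> E" "active_collider_tree V T p u v W"
    by (rule active_path_imp_active_collider_tree[OF assms path act])
  then show "\<exists>T p. T \<subseteq> E \<and> active_collider_tree V T p u v W" by blast
next
  assume "\<exists>T p. T \<subseteq> E \<and> active_collider_tree V T p u v W"
  then obtain T p where "T \<subseteq> E" "active_collider_tree V T p u v W" by blast
  then show "\<not> d_separated E u v W"
    using active_collider_tree_imp_active_path assms(1) unfolding d_separated_def by metis
qed

section \<open>Derivations and attacks\<close>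

lemma attacksI: "S' \<subseteq> S \<Longrightarrow> a \<in> T \<Longrightarrow> derives R A S' (c a) \<Longrightarrow> attacks R A c S T"
  unfolding attacks_def by blast

lemma attacks_mono: "attacks R A c S T \<Longrightarrow> S \<subseteq> S' \<Longrightarrow> T \<subseteq> T' \<Longrightarrow> attacks R A c S' T'"
  unfolding attacks_def by blast

lemma derives_from_rule:
  assumes "(h, B) \<in> R" "finite B" "B \<subseteq> A"
  shows "derives R A B h"
proof -
  have "derives R A (\<Union>b\<in>B. {b}) h"
    using assms by (intro derives.rule) (auto intro: derives.leaf)
  then show ?thesis by simp
qed

lemma derives_single_rule:
  assumes "derives R A S q" and "\<And>B b B'. (q, B) \<in> R \<Longrightarrow> b \<in> B \<Longrightarrow> (b, B') \<notin> R"
  shows "(q \<in> A \<and> S = {q}) \<or> (q, S) \<in> R"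
  using assms(1)
proof cases
  case (rule B f)
  have "f b = {b}" if "b \<in> B" for b
  proof -
    have "derives R A (f b) b" using rule(4) that by blast
    then show ?thesis by cases (use assms(2)[OF rule(2) that] in auto)
  qed
  then show ?thesis using rule by simp
qed simp

lemma derives_non_head: "derives R A S q \<Longrightarrow> (\<And>B. (q, B) \<notin> R) \<Longrightarrow> S = {q}"
  using derives_single_rule by fastforce

lemma complete_if_attacks_all_outside:
  assumes SA: "S \<subseteq> A" and cf: "conflict_free R A c S" and out: "\<forall>a\<in>A - S. attacks R A c S {a}"
  shows "complete_ext R A c S"
proof -
  have "defends R A c S S"
    unfolding defends_def
  proof (intro allI impI)
    fix U assume "U \<subseteq> A" "attacks R A c U S"
    then obtain U' a where U': "U' \<subseteq> U" "U' \<subseteq> A" "a \<in> S" "derives R A U' (c a)"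
      unfolding attacks_def by blast
    then obtain u where "u \<in> U'" "u \<notin> S"
      using cf attacksI[of U' S a S R A c] unfolding conflict_free_def by blast
    then show "attacks R A c S U" using out U' by (blast intro: attacks_mono)
  qed
  moreover have "T \<subseteq> S" if "T \<subseteq> A" "defends R A c S T" for T
  proof
    fix t assume "t \<in> T"
    show "t \<in> S"
    proof (rule ccontr)
      assume "t \<notin> S"
      then have "attacks R A c S T" using out that(1) \<open>t \<in> T\<close> by (blast intro: attacks_mono)
      then have "attacks R A c S S" using that SA unfolding defends_def by blast
      then show False using cf unfolding conflict_free_def by blast
    qed
  qed
  ultimately show ?thesis using SA cf unfolding complete_ext_def admissible_def by blast
qed

lemma stable_ext_iff:
  "stable_ext R A c S \<longleftrightarrow>
     closed_set R A S \<and> S \<subseteq> A \<and> conflict_free R A c S \<and> (\<forall>a\<in>A - S. attacks R A c S {a})"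
  using complete_if_attacks_all_outside unfolding stable_ext_def complete_ext_def admissible_def
  by blast

lemma stable_imp_complete: "stable_ext R A c S \<Longrightarrow> complete_ext R A c S"
  using complete_if_attacks_all_outside unfolding stable_ext_iff by blast

section \<open>The causal framework\<close>

fun graph_sent :: "'v sent \<Rightarrow> bool" where
  "graph_sent (Arr u v) = True"
| "graph_sent (Noe e) = True"
| "graph_sent _ = False"

lemma walk_iff_cyc_body_subset:
  "walk E xs \<longleftrightarrow> 2 \<le> length xs \<and> cyc_body xs \<subseteq> arr_body E"
  by (auto simp: walk_def cyc_body_def arr_body_def)

lemma finite_cyc_body: "finite (cyc_body xs)"
proof -
  have "cyc_body xs = (\<lambda>j. Arr (xs ! j) (xs ! Suc j)) ` {..<length xs - 1}"
    by (auto simp: cyc_body_def)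
  then show ?thesis by simp
qed

lemma finite_arr_body: "finite T \<Longrightarrow> finite (arr_body T)"
proof -
  assume "finite T"
  moreover have "arr_body T = (\<lambda>(s, t). Arr s t) ` T" by (auto simp: arr_body_def)
  ultimately show ?thesis by simp
qed

lemma Arr_in_arr_body_iff [simp]: "Arr s t \<in> arr_body T \<longleftrightarrow> (s, t) \<in> T"
  by (simp add: arr_body_def)

lemma active_collider_tree_dag:
  assumes "active_collider_tree V T p u v W"
  shows "T \<subseteq> V \<times> V - Id" "acyclic T"
proof -
  obtain H where "H \<subseteq> V \<times> V" "acyclic H" "T \<subseteq> H"
    using assms unfolding active_collider_tree_def collider_tree_def by blast
  moreover have "(s, s) \<notin> H" for s
    using \<open>acyclic H\<close> unfolding acyclic_def by (blast intro: r_into_trancl')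
  ultimately show "T \<subseteq> V \<times> V - Id" "acyclic T" by (auto intro: acyclic_subset)
qed

locale causal_aba =
  fixes V :: "'v set" and x y :: 'v and Z :: "'v set"
  assumes finite_V: "finite V" and x_in_V: "x \<in> V" and y_in_V: "y \<in> V"
    and x_neq_y: "x \<noteq> y" and Z_subset: "Z \<subseteq> V - {x, y}"
begin

abbreviation "R \<equiv> rules_csl V x y Z"
abbreviation "A \<equiv> asm_csl V"

lemma Arr_in_asm_iff: "Arr u v \<in> A \<longleftrightarrow> u \<in> V \<and> v \<in> V \<and> u \<noteq> v"
  by (auto simp: asm_csl_def asm_ds_def)

lemma Noe_in_asm_iff: "Noe e \<in> A \<longleftrightarrow> (\<exists>u v. e = {u, v} \<and> u \<in> V \<and> v \<in> V \<and> u \<noteq> v)"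
  by (auto simp: asm_csl_def asm_ds_def)

lemma Indep_in_asm:
  "u \<in> V \<Longrightarrow> v \<in> V \<Longrightarrow> u \<noteq> v \<Longrightarrow> W \<subseteq> V - {u, v} \<Longrightarrow> Indep {u, v} W \<in> A"
  unfolding asm_csl_def asm_ds_def by blast

lemma Bp_in_asm: "vpath V p x y \<Longrightarrow> Bp p Z \<in> A"
  using x_in_V y_in_V x_neq_y Z_subset unfolding asm_csl_def by blast

lemma not_in_asm [simp]: "Ctr a \<notin> A" "Ap p W \<notin> A" "Ed u v \<notin> A"
  by (auto simp: asm_csl_def asm_ds_def)

lemma rule_contrary_pair:
  assumes "u \<in> V" "v \<in> V" "u \<noteq> v"
    and "a \<in> {Arr u v, Arr v u, Noe {u, v}}" "b \<in> {Arr u v, Arr v u, Noe {u, v}}" "a \<noteq> b"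
  shows "(ctr a, {b}) \<in> R"
  using assms unfolding rules_csl_def rules_ds_def by (simp only: Un_iff mem_Collect_eq) blast

lemma rule_cycle:
  assumes "2 \<le> length xs" "set xs \<subseteq> V" "hd xs = last xs"
    "\<forall>j. Suc j < length xs \<longrightarrow> xs ! j \<noteq> xs ! Suc j" "Suc i < length xs"
  shows "(Ctr (Arr (xs ! i) (xs ! Suc i)), cyc_body xs) \<in> R"
proof -
  have "(ctr (Arr (xs ! i) (xs ! Suc i)), cyc_body xs) \<in> rules_ds V"
    using assms unfolding rules_ds_def by (simp only: Un_iff mem_Collect_eq) blast
  then show ?thesis by (simp add: rules_csl_def)
qed

lemma rule_Indep_contrary:
  assumes "u \<in> V" "v \<in> V" "u \<noteq> v" "W \<subseteq> V - {u, v}" "active_collider_tree V T p u v W"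
  shows "(Ctr (Indep {u, v} W), arr_body T) \<in> R"
proof -
  have "(ctr (Indep {u, v} W), arr_body T) \<in> rules_ds V"
    using assms unfolding rules_ds_def by (simp only: Un_iff mem_Collect_eq, intro disjI2) blast
  then show ?thesis by (simp add: rules_csl_def)
qed

lemma rule_Ap: "active_collider_tree V T p x y Z \<Longrightarrow> (Ap p Z, arr_body T) \<in> R"
  unfolding rules_csl_def by blast

lemma rule_Indep: "(Indep {x, y} Z, {Bp p Z | p. vpath V p x y}) \<in> R"
  unfolding rules_csl_def by blast

lemma rule_Indep_contrary_fact: "(Ctr (Indep {x, y} Z), {}) \<in> R"
  unfolding rules_csl_def by simp

lemma not_head [simp]: "(Arr u v, B) \<notin> R" "(Noe e, B) \<notin> R" "(Bp p W, B) \<notin> R"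
  by (auto simp: rules_csl_def rules_ds_def)

lemma rules_Ctr_Arr:
  "(Ctr (Arr u v), B) \<in> R \<Longrightarrow>
     B = {Arr v u} \<or> B = {Noe {u, v}} \<or> (\<exists>xs. B = cyc_body xs \<and> 2 \<le> length xs \<and> hd xs = last xs)"
  by (auto simp: rules_csl_def rules_ds_def insert_commute)

lemma rules_Ctr_Noe:
  "(Ctr (Noe e), B) \<in> R \<Longrightarrow> \<exists>u v. e = {u, v} \<and> (B = {Arr u v} \<or> B = {Arr v u} \<or> B = {Ed u v})"
  by (auto simp: rules_csl_def rules_ds_def) blast+

lemma rules_Ed: "(Ed u v, B) \<in> R \<Longrightarrow> B = {Arr u v} \<or> B = {Arr v u}"
  by (auto simp: rules_csl_def rules_ds_def)

lemma rules_Ctr_Indep: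
  "(Ctr (Indep e W), B) \<in> R \<Longrightarrow>
     (e = {x, y} \<and> W = Z \<and> B = {}) \<or>
     (\<exists>u v T p. e = {u, v} \<and> active_collider_tree V T p u v W \<and> B = arr_body T)"
  by (auto simp: rules_csl_def rules_ds_def)

lemma rules_Ap:
  "(Ap p W, B) \<in> R \<Longrightarrow> W = Z \<and> (\<exists>T. active_collider_tree V T p x y Z \<and> B = arr_body T)"
  by (auto simp: rules_csl_def rules_ds_def)

lemma rules_Indep: "(Indep e W, B) \<in> R \<Longrightarrow> e = {x, y} \<and> W = Z \<and> B = {Bp p Z | p. vpath V p x y}"
  by (auto simp: rules_csl_def rules_ds_def)

lemma derives_Ctr_Arr:
  assumes "derives R A S (Ctr (Arr u v))"
  shows "S = {Arr v u} \<or> S = {Noe {u, v}} \<or>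
    (\<exists>xs. S = cyc_body xs \<and> 2 \<le> length xs \<and> hd xs = last xs)"
proof -
  have "(b, B') \<notin> R" if "(Ctr (Arr u v), B) \<in> R" "b \<in> B" for B b B'
    using rules_Ctr_Arr[OF that(1)] that(2) by (auto simp: cyc_body_def)
  then have "(Ctr (Arr u v), S) \<in> R" using derives_single_rule[OF assms] by auto
  then show ?thesis by (rule rules_Ctr_Arr)
qed

lemma derives_Ed: "derives R A S (Ed u v) \<Longrightarrow> S = {Arr u v} \<or> S = {Arr v u}"
  using derives_single_rule[of R A S "Ed u v"] rules_Ed by fastforce

lemma derives_Ctr_Noe:
  assumes "derives R A S (Ctr (Noe e))"
  shows "\<exists>u v. e = {u, v} \<and> (S = {Arr u v} \<or> S = {Arr v u})"
  using assms
proof cases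
  case (rule B f)
  then obtain u v where "e = {u, v}" "B = {Arr u v} \<or> B = {Arr v u} \<or> B = {Ed u v}"
    using rules_Ctr_Noe by blast
  then show ?thesis
    using rule derives_non_head[of R A _ "Arr _ _"] derives_Ed by fastforce
qed simp

lemma derives_Ctr_Indep:
  assumes "derives R A S (Ctr (Indep e W))"
  shows "(e = {x, y} \<and> W = Z \<and> S = {}) \<or>
    (\<exists>u v T p. e = {u, v} \<and> active_collider_tree V T p u v W \<and> S = arr_body T)"
proof -
  have "(b, B') \<notin> R" if "(Ctr (Indep e W), B) \<in> R" "b \<in> B" for B b B'
    using rules_Ctr_Indep[OF that(1)] that(2) by (auto simp: arr_body_def)
  then have "(Ctr (Indep e W), S) \<in> R" using derives_single_rule[OF assms] by auto
  then show ?thesis by (rule rules_Ctr_Indep)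
qed

lemma derives_Ap:
  assumes "derives R A S (Ap p W)"
  shows "W = Z \<and> (\<exists>T. active_collider_tree V T p x y Z \<and> S = arr_body T)"
proof -
  have "(b, B') \<notin> R" if "(Ap p W, B) \<in> R" "b \<in> B" for B b B'
    using rules_Ap[OF that(1)] that(2) by (auto simp: arr_body_def)
  then have "(Ap p W, S) \<in> R" using derives_single_rule[OF assms] by auto
  then show ?thesis by (rule rules_Ap)
qed

lemma derives_Indep:
  assumes "derives R A S (Indep e W)"
  shows "S = {Indep e W} \<or> (e = {x, y} \<and> W = Z \<and> S = {Bp p Z | p. vpath V p x y})"
proof -
  have "(b, B') \<notin> R" if "(Indep e W, B) \<in> R" "b \<in> B" for B b B'
    using rules_Indep[OF that(1)] that(2) by auto
  then show ?thesis using derives_single_rule[OF assms] rules_Indep by blast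
qed

lemma derives_contrary_graph_sent:
  assumes "a \<in> A" "derives R A S (ctr a)" "s \<in> S"
  shows "graph_sent s"
proof -
  have "a \<in> asm_ds V \<or> (\<exists>p W. a = Bp p W)" using assms(1) unfolding asm_csl_def by blast
  then consider u v where "a = Arr u v" | e where "a = Noe e" | e W where "a = Indep e W"
    | p W where "a = Bp p W"
    unfolding asm_ds_def by blast
  then show ?thesis
  proof cases
    case 1
    then show ?thesis using assms derives_Ctr_Arr by (fastforce simp: cyc_body_def)
  next
    case 2
    then show ?thesis using assms derives_Ctr_Noe by fastforce
  next
    case 3
    then show ?thesis using assms derives_Ctr_Indep by (fastforce simp: arr_body_def)
  next
    case 4
    then show ?thesis using assms derives_Ap by (fastforce simp: arr_body_def)
  qed
qed

lemma arr_body_subset_asm: "E \<subseteq> V \<times> V - Id \<Longrightarrow> arr_body E \<subseteq> A"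
  by (auto simp: arr_body_def Arr_in_asm_iff)

lemma graph_of_subset: "S \<subseteq> A \<Longrightarrow> graph_of V S \<subseteq> V \<times> V - Id"
  by (auto simp: graph_of_def Arr_in_asm_iff)

lemma derives_from_tree:
  assumes "(h, arr_body T) \<in> R" "active_collider_tree V T p u v W"
  shows "derives R A (arr_body T) h"
proof (rule derives_from_rule[OF assms(1)])
  have "T \<subseteq> V \<times> V - Id" using active_collider_tree_dag(1)[OF assms(2)] .
  then show "finite (arr_body T)" "arr_body T \<subseteq> A"
    using finite_V arr_body_subset_asm finite_arr_body[of T] finite_subset[of T "V \<times> V"] by auto
qed

lemma derives_from_cycle:
  assumes E: "E \<subseteq> V \<times> V - Id" and cyc: "walk E xs" "hd xs = last xs" and i: "Suc i < length xs"
  shows "derives R A (cyc_body xs) (Ctr (Arr (xs ! i) (xs ! Suc i)))"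
proof (rule derives_from_rule)
  have "set xs \<subseteq> V" using walk_set_subset_Field[OF cyc(1)] E by (auto simp: Field_def)
  moreover have "\<forall>j. Suc j < length xs \<longrightarrow> xs ! j \<noteq> xs ! Suc j"
    using cyc(1) E by (auto simp: walk_def)
  ultimately show "(Ctr (Arr (xs ! i) (xs ! Suc i)), cyc_body xs) \<in> R"
    using rule_cycle cyc i by (auto simp: walk_def)
  show "finite (cyc_body xs)" by (rule finite_cyc_body)
  show "cyc_body xs \<subseteq> A"
    using cyc(1) arr_body_subset_asm[OF E] by (auto simp: walk_iff_cyc_body_subset)
qed

lemma Indep_x_y_Z_notin: "conflict_free R A ctr S \<Longrightarrow> Indep {x, y} Z \<notin> S"
  using derives_from_rule[OF rule_Indep_contrary_fact] attacksI[of "{}" S "Indep {x, y} Z" S]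
  unfolding conflict_free_def by auto

lemma closed_misses_Bp:
  assumes "closed_set R A S" "Indep {x, y} Z \<notin> S"
  obtains p where "vpath V p x y" "Bp p Z \<notin> S"
proof -
  have "finite {Bp p Z | p. vpath V p x y}"
  proof (rule finite_subset)
    show "{Bp p Z | p. vpath V p x y} \<subseteq> (\<lambda>p. Bp p Z) ` {p. set p \<subseteq> V \<and> distinct p}"
      by (auto simp: vpath_def)
    show "finite ((\<lambda>p. Bp p Z) ` {p. set p \<subseteq> V \<and> distinct p})"
      using finite_subset_distinct[OF finite_V] by simp
  qed
  moreover have "{Bp p Z | p. vpath V p x y} \<subseteq> A" using Bp_in_asm by blast
  ultimately have der: "derives R A {Bp p Z | p. vpath V p x y} (Indep {x, y} Z)"
    by (rule derives_from_rule[OF rule_Indep])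
  have "\<not> {Bp p Z | p. vpath V p x y} \<subseteq> S"
  proof
    assume "{Bp p Z | p. vpath V p x y} \<subseteq> S"
    then have "Indep {x, y} Z \<in> S"
      using assms(1) der Indep_in_asm[OF x_in_V y_in_V x_neq_y Z_subset] unfolding closed_set_def by blast
    with assms(2) show False by contradiction
  qed
  then show ?thesis using that by blast
qed

lemma conflict_free_not_attacks_own_arrow:
  "conflict_free R A ctr S \<Longrightarrow> (s, t) \<in> graph_of V S \<Longrightarrow> \<not> attacks R A ctr S {Arr s t}"
  unfolding conflict_free_def graph_of_def by (auto intro: attacks_mono)

lemma admissible_attacks_arrow_on_cycle:
  assumes adm: "admissible R A ctr S" and G: "G \<subseteq> V \<times> V - Id"
    and cyc: "walk G xs" "hd xs = last xs"
    and j: "Suc j < length xs" "Arr (xs ! j) (xs ! Suc j) \<in> S"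
  obtains s t where "(s, t) \<in> G" "attacks R A ctr S {Arr s t}"
proof -
  have cyc_G: "cyc_body xs \<subseteq> arr_body G" using cyc(1) by (simp add: walk_iff_cyc_body_subset)
  have "derives R A (cyc_body xs) (ctr (Arr (xs ! j) (xs ! Suc j)))"
    using derives_from_cycle[OF G cyc j(1)] by simp
  then have "attacks R A ctr (cyc_body xs) S" by (rule attacksI[OF subset_refl j(2)])
  moreover have "cyc_body xs \<subseteq> A" using cyc_G arr_body_subset_asm[OF G] by (rule order_trans)
  ultimately have "attacks R A ctr S (cyc_body xs)"
    using adm unfolding admissible_def defends_def by blast
  then obtain S' e where S': "S' \<subseteq> S" "e \<in> cyc_body xs" "derives R A S' (ctr e)"
    unfolding attacks_def by blast
  then obtain s t where st: "e = Arr s t" "(s, t) \<in> G" using cyc_G unfolding arr_body_def by blast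
  then have "attacks R A ctr S {Arr s t}" using attacksI[of S' S "Arr s t" "{Arr s t}"] S' by simp
  with st(2) show thesis by (rule that)
qed

lemma acyclic_graph_of_Un:
  assumes adm: "admissible R A ctr S" and T: "T \<subseteq> V \<times> V" "acyclic T"
    and unattacked: "\<forall>(s, t) \<in> T. \<not> attacks R A ctr S {Arr s t}"
  shows "acyclic (graph_of V S \<union> T)"
  unfolding acyclic_def
proof (intro allI notI)
  define G where "G = graph_of V S \<union> T"
  have SA: "S \<subseteq> A" and cf: "conflict_free R A ctr S"
    using adm unfolding admissible_def by blast+
  have "T \<subseteq> V \<times> V - Id" using T unfolding acyclic_def by (auto intro: r_into_trancl')
  then have G: "G \<subseteq> V \<times> V - Id" using graph_of_subset[OF SA] unfolding G_def by blast
  fix w assume "(w, w) \<in> (graph_of V S \<union> T)\<^sup>+"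
  then obtain xs where xs: "walk G xs" "hd xs = w" "last xs = w"
    unfolding G_def by (rule trancl_imp_walk)
  have "\<not> walk T xs"
  proof
    assume "walk T xs"
    then have "(w, w) \<in> T\<^sup>+" using walk_imp_trancl[of T xs] xs by simp
    then show False using T(2) unfolding acyclic_def by blast
  qed
  then obtain j where j: "Suc j < length xs" "(xs ! j, xs ! Suc j) \<notin> T"
    using xs(1) unfolding walk_def by auto
  then have "(xs ! j, xs ! Suc j) \<in> graph_of V S"
    using xs(1) unfolding walk_def G_def by auto
  then have "Arr (xs ! j) (xs ! Suc j) \<in> S" by (simp add: graph_of_def)
  then obtain s t where st: "(s, t) \<in> G" "attacks R A ctr S {Arr s t}"
    using admissible_attacks_arrow_on_cycle[OF adm G xs(1) _ j(1)] xs(2,3) by metis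
  show False
  proof (cases "(s, t) \<in> T")
    case True
    then show False using st(2) unattacked by blast
  next
    case False
    then show False using st conflict_free_not_attacks_own_arrow[OF cf] unfolding G_def by blast
  qed
qed

lemma acyclic_graph_of: "admissible R A ctr S \<Longrightarrow> acyclic (graph_of V S)"
  using acyclic_graph_of_Un[of S "{}"] by (simp add: acyclic_def)

section \<open>Extensions induced by DAGs\<close>

definition dag_asms :: "('v \<times> 'v) set \<Rightarrow> 'v sent set" where
  "dag_asms G = arr_body G \<union> {Noe {u, v} | u v. u \<in> V \<and> v \<in> V \<and> u \<noteq> v \<and> \<not> adj G u v}"

definition dag_ext :: "('v \<times> 'v) set \<Rightarrow> 'v sent set" where
  "dag_ext G = {a \<in> A. \<not> attacks R A ctr (dag_asms G) {a}}"

lemma Arr_in_dag_asms_iff: "Arr s t \<in> dag_asms G \<longleftrightarrow> (s, t) \<in> G"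
  by (auto simp: dag_asms_def)

lemma Noe_in_dag_asms_iff:
  "Noe {u, v} \<in> dag_asms G \<longleftrightarrow> u \<in> V \<and> v \<in> V \<and> u \<noteq> v \<and> \<not> adj G u v"
  by (auto simp: dag_asms_def arr_body_def doubleton_eq_iff adj_def)

lemma dag_asms_cases:
  assumes "e \<in> dag_asms G"
  obtains s t where "e = Arr s t" "(s, t) \<in> G" | u v where "e = Noe {u, v}" "\<not> adj G u v"
  using assms unfolding dag_asms_def arr_body_def by blast

lemma dag_asms_subset_asm: "G \<subseteq> V \<times> V - Id \<Longrightarrow> dag_asms G \<subseteq> A"
  using arr_body_subset_asm by (auto simp: dag_asms_def Noe_in_asm_iff) blast

lemma conflict_free_dag_asms:
  assumes G: "acyclic G"
  shows "conflict_free R A ctr (dag_asms G)"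
  unfolding conflict_free_def attacks_def
proof clarify
  fix S' e assume S': "S' \<subseteq> dag_asms G" and e: "e \<in> dag_asms G" and der: "derives R A S' (ctr e)"
  from e show False
  proof (cases rule: dag_asms_cases)
    case (1 s t)
    then have "derives R A S' (Ctr (Arr s t))" using der by simp
    then consider "S' = {Arr t s}" | "S' = {Noe {s, t}}"
      | xs where "S' = cyc_body xs" "2 \<le> length xs" "hd xs = last xs"
      using derives_Ctr_Arr by blast
    then show False
    proof cases
      case 1
      then show False using S' \<open>(s, t) \<in> G\<close> acyclic_asym[OF G] by (simp add: Arr_in_dag_asms_iff)
    next
      case 2
      then show False using S' \<open>(s, t) \<in> G\<close> by (simp add: Noe_in_dag_asms_iff adj_def)
    next
      case (3 xs)
      have "cyc_body xs \<subseteq> arr_body G"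
        using S' 3(1) by (auto simp: cyc_body_def Arr_in_dag_asms_iff)
      then have "walk G xs" using 3(2) by (simp add: walk_iff_cyc_body_subset)
      then have "(hd xs, last xs) \<in> G\<^sup>+" by (rule walk_imp_trancl)
      then show False using 3(3) G unfolding acyclic_def by simp
    qed
  next
    case (2 u v)
    then have "derives R A S' (Ctr (Noe {u, v}))" using der by simp
    then obtain u' v' where "{u, v} = {u', v'}" "S' = {Arr u' v'} \<or> S' = {Arr v' u'}"
      using derives_Ctr_Noe by blast
    then show False
      using S' \<open>\<not> adj G u v\<close> by (auto simp: Arr_in_dag_asms_iff adj_def doubleton_eq_iff)
  qed
qed

lemma dag_asms_subset_dag_ext:
  assumes "G \<subseteq> V \<times> V - Id" "acyclic G"
  shows "dag_asms G \<subseteq> dag_ext G"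
proof
  fix e assume e: "e \<in> dag_asms G"
  then have "\<not> attacks R A ctr (dag_asms G) {e}"
    using conflict_free_dag_asms[OF assms(2)] attacks_mono[of R A ctr "dag_asms G" "{e}"]
    unfolding conflict_free_def by blast
  then show "e \<in> dag_ext G" using e dag_asms_subset_asm[OF assms(1)] unfolding dag_ext_def by blast
qed

lemma dag_asms_attacks_graph_sent:
  assumes G: "G \<subseteq> V \<times> V" and a: "a \<in> A" "graph_sent a" "a \<notin> dag_asms G"
  shows "attacks R A ctr (dag_asms G) {a}"
proof -
  have "\<exists>b \<in> dag_asms G \<inter> A. (ctr a, {b}) \<in> R"
  proof (cases a)
    case (Arr s t)
    then have st: "s \<in> V" "t \<in> V" "s \<noteq> t" "(s, t) \<notin> G"
      using a by (simp_all add: Arr_in_asm_iff Arr_in_dag_asms_iff)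
    show ?thesis
    proof (cases "(t, s) \<in> G")
      case True
      then show ?thesis using Arr st rule_contrary_pair[of s t "Arr s t" "Arr t s"]
        by (auto simp: Arr_in_dag_asms_iff Arr_in_asm_iff)
    next
      case False
      then have "Noe {s, t} \<in> dag_asms G \<inter> A"
        using st by (auto simp: Noe_in_dag_asms_iff Noe_in_asm_iff adj_def)
      then show ?thesis using Arr st rule_contrary_pair[of s t "Arr s t" "Noe {s, t}"] by auto
    qed
  next
    case (Noe e)
    then obtain u v where uv: "a = Noe {u, v}" "u \<in> V" "v \<in> V" "u \<noteq> v"
      using a by (auto simp: Noe_in_asm_iff)
    then have "(u, v) \<in> G \<or> (v, u) \<in> G" using a by (auto simp: Noe_in_dag_asms_iff adj_def)
    then show ?thesis
      using uv rule_contrary_pair[of u v "Noe {u, v}" "Arr u v"]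
        rule_contrary_pair[of u v "Noe {u, v}" "Arr v u"] G
      by (auto simp: Arr_in_dag_asms_iff Arr_in_asm_iff)
  qed (use a in simp_all)
  then obtain b where "b \<in> dag_asms G" "b \<in> A" "(ctr a, {b}) \<in> R" by blast
  then show ?thesis
    using attacksI[of "{b}" "dag_asms G" a "{a}"] derives_from_rule[of "ctr a" "{b}"] by simp
qed

lemma conflict_free_dag_ext:
  assumes G: "G \<subseteq> V \<times> V"
  shows "conflict_free R A ctr (dag_ext G)"
  unfolding conflict_free_def
proof
  assume "attacks R A ctr (dag_ext G) (dag_ext G)"
  then obtain S' a where S': "S' \<subseteq> dag_ext G" "a \<in> dag_ext G" "derives R A S' (ctr a)"
    unfolding attacks_def by blast
  have "S' \<subseteq> dag_asms G"
  proof
    fix s assume s: "s \<in> S'"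
    then have "graph_sent s"
      using derives_contrary_graph_sent S'(2,3) unfolding dag_ext_def by blast
    then show "s \<in> dag_asms G"
      using dag_asms_attacks_graph_sent[OF G] s S'(1) unfolding dag_ext_def by blast
  qed
  then have "attacks R A ctr (dag_asms G) {a}"
    using attacksI[of S' "dag_asms G" a "{a}"] S'(3) by simp
  then show False using S'(2) unfolding dag_ext_def by blast
qed

lemma dag_asms_attacks_Bp:
  assumes "T \<subseteq> G" "active_collider_tree V T p x y Z"
  shows "attacks R A ctr (dag_asms G) {Bp p Z}"
proof -
  have "arr_body T \<subseteq> dag_asms G" using assms(1) by (auto simp: arr_body_def Arr_in_dag_asms_iff)
  moreover have "derives R A (arr_body T) (ctr (Bp p Z))"
    using derives_from_tree[OF rule_Ap[OF assms(2)] assms(2)] by simp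
  ultimately show ?thesis using attacksI[of "arr_body T" "dag_asms G" "Bp p Z" "{Bp p Z}"] by simp
qed

lemma closed_dag_ext:
  assumes G: "G \<subseteq> V \<times> V" "acyclic G" and connected: "\<not> d_separated G x y Z"
  shows "closed_set R A (dag_ext G)"
  unfolding closed_set_def
proof (intro allI impI ballI)
  fix S' a assume S': "S' \<subseteq> dag_ext G" and a: "a \<in> A" and der: "derives R A S' a"
  show "a \<in> dag_ext G"
  proof (cases "\<exists>e W. a = Indep e W")
    case True
    obtain T p where T: "T \<subseteq> G" "active_collider_tree V T p x y Z"
      using d_connected_iff_active_collider_tree[OF G(2,1), THEN iffD1, OF connected] by blast
    have "is_path T p x y" using T(2) unfolding active_collider_tree_def collider_tree_def by blast
    moreover have "Field T \<subseteq> V" using T(1) G(1) by (auto simp: Field_def)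
    ultimately have "vpath V p x y" using is_path_set_subset_Field[of T p x y] x_neq_y
      unfolding vpath_def is_path_def by blast
    moreover have "Bp p Z \<notin> dag_ext G" using dag_asms_attacks_Bp[OF T] unfolding dag_ext_def by blast
    moreover obtain e W where "a = Indep e W" using True by blast
    then have "S' = {a} \<or> S' = {Bp p Z | p. vpath V p x y}" using derives_Indep der by blast
    ultimately show ?thesis using S' by blast
  next
    case False
    then have "(a, B) \<notin> R" for B using a by (auto simp: asm_csl_def asm_ds_def)
    then have "S' = {a}" using derives_non_head[OF der] by blast
    then show ?thesis using S' by blast
  qed
qed

lemma dag_ext_stable:
  assumes G: "G \<subseteq> V \<times> V - Id" "acyclic G" and connected: "\<not> d_separated G x y Z"
  shows "stable_ext R A ctr (dag_ext G)"
  unfolding stable_ext_iff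
proof (intro conjI ballI)
  have G': "G \<subseteq> V \<times> V" using G(1) by blast
  show "closed_set R A (dag_ext G)" using closed_dag_ext[OF G' G(2) connected] .
  show "dag_ext G \<subseteq> A" unfolding dag_ext_def by blast
  show "conflict_free R A ctr (dag_ext G)" using conflict_free_dag_ext[OF G'] .
  fix a assume "a \<in> A - dag_ext G"
  then have "attacks R A ctr (dag_asms G) {a}" unfolding dag_ext_def by blast
  then show "attacks R A ctr (dag_ext G) {a}"
    using attacks_mono dag_asms_subset_dag_ext[OF G] by blast
qed

lemma admissible_not_attacks_dag_asms:
  assumes SA: "S \<subseteq> A" and G: "graph_of V S \<subseteq> G"
    and unattacked: "\<forall>(s, t) \<in> G. \<not> attacks R A ctr S {Arr s t}" and e: "e \<in> dag_asms G"
  shows "\<not> attacks R A ctr S {e}"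
  using e
proof (cases rule: dag_asms_cases)
  case (1 s t)
  then show ?thesis using unattacked by blast
next
  case (2 u v)
  show ?thesis
  proof
    assume "attacks R A ctr S {e}"
    then obtain S' where "S' \<subseteq> S" "derives R A S' (Ctr (Noe {u, v}))"
      unfolding attacks_def using 2 by auto
    moreover obtain u' v' where uv': "{u, v} = {u', v'}" "S' = {Arr u' v'} \<or> S' = {Arr v' u'}"
      using derives_Ctr_Noe calculation(2) by blast
    ultimately have "(u', v') \<in> graph_of V S \<or> (v', u') \<in> graph_of V S"
      using SA by (auto simp: graph_of_def Arr_in_asm_iff)
    then show False using G 2 uv'(1) by (auto simp: adj_def doubleton_eq_iff)
  qed
qed

lemma admissible_subset_dag_ext:
  assumes adm: "admissible R A ctr S" and G: "G \<subseteq> V \<times> V - Id" "graph_of V S \<subseteq> G"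
    and unattacked: "\<forall>(s, t) \<in> G. \<not> attacks R A ctr S {Arr s t}"
  shows "S \<subseteq> dag_ext G"
proof
  fix a assume aS: "a \<in> S"
  have SA: "S \<subseteq> A" and def: "defends R A ctr S S"
    using adm unfolding admissible_def by blast+
  have "\<not> attacks R A ctr (dag_asms G) {a}"
  proof
    assume "attacks R A ctr (dag_asms G) {a}"
    then obtain S' where S': "S' \<subseteq> dag_asms G" "derives R A S' (ctr a)"
      unfolding attacks_def by auto
    have "attacks R A ctr S' S" using attacksI[of S' S' a S] aS S'(2) by simp
    moreover have "S' \<subseteq> A" using S'(1) dag_asms_subset_asm[OF G(1)] by blast
    ultimately have "attacks R A ctr S S'" using def unfolding defends_def by blast
    then obtain e where "e \<in> S'" "attacks R A ctr S {e}"
      unfolding attacks_def by blast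
    then show False
      using admissible_not_attacks_dag_asms[OF SA G(2) unattacked] S'(1) by blast
  qed
  then show "a \<in> dag_ext G" using aS SA unfolding dag_ext_def by blast
qed

section \<open>Preferred and stable extensions\<close>

lemma complete_has_unattacked_tree:
  assumes co: "complete_ext R A ctr S" and p: "vpath V p x y" "Bp p Z \<notin> S"
  obtains T where "active_collider_tree V T p x y Z" "\<forall>(s, t) \<in> T. \<not> attacks R A ctr S {Arr s t}"
proof -
  have "\<not> defends R A ctr S {Bp p Z}" using co p Bp_in_asm unfolding complete_ext_def by blast
  then obtain U where U: "attacks R A ctr U {Bp p Z}" "\<not> attacks R A ctr S U"
    unfolding defends_def by blast
  then obtain U' where "U' \<subseteq> U" "derives R A U' (Ap p Z)" unfolding attacks_def by auto
  then obtain T where T: "active_collider_tree V T p x y Z" "arr_body T \<subseteq> U"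
    using derives_Ap by blast
  have "\<not> attacks R A ctr S {Arr s t}" if "(s, t) \<in> T" for s t
  proof
    assume "attacks R A ctr S {Arr s t}"
    moreover have "Arr s t \<in> U" using that T(2) by auto
    ultimately have "attacks R A ctr S U" using attacks_mono[of R A ctr S "{Arr s t}" S U] by simp
    then show False using U(2) by contradiction
  qed
  with T(1) show thesis using that by blast
qed

lemma complete_extends_to_stable:
  assumes cl: "closed_set R A S" and co: "complete_ext R A ctr S"
  obtains S' where "stable_ext R A ctr S'" "S \<subseteq> S'"
proof -
  have adm: "admissible R A ctr S" using co unfolding complete_ext_def by blast
  then have SA: "S \<subseteq> A" and cf: "conflict_free R A ctr S" unfolding admissible_def by blast+
  obtain p where p: "vpath V p x y" "Bp p Z \<notin> S"
    using closed_misses_Bp[OF cl Indep_x_y_Z_notin[OF cf]] by blast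
  obtain T where T: "active_collider_tree V T p x y Z"
    and T_unattacked: "\<forall>(s, t) \<in> T. \<not> attacks R A ctr S {Arr s t}"
    using complete_has_unattacked_tree[OF co p] by blast
  define G where "G = graph_of V S \<union> T"
  have TV: "T \<subseteq> V \<times> V - Id" "acyclic T" using active_collider_tree_dag[OF T] by blast+
  have G: "G \<subseteq> V \<times> V - Id" "acyclic G" "graph_of V S \<subseteq> G"
    using graph_of_subset[OF SA] TV acyclic_graph_of_Un[OF adm _ TV(2) T_unattacked]
    unfolding G_def by blast+
  have G_unattacked: "\<forall>(s, t) \<in> G. \<not> attacks R A ctr S {Arr s t}"
    using T_unattacked conflict_free_not_attacks_own_arrow[OF cf] unfolding G_def by blast
  have "T \<subseteq> G" unfolding G_def by blast
  then have "\<not> d_separated G x y Z"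
    using d_connected_iff_active_collider_tree[of G V, THEN iffD2] G(1,2) T by blast
  then show thesis
    using that dag_ext_stable[OF G(1,2)] admissible_subset_dag_ext[OF adm G(1,3) G_unattacked] by blast
qed

lemma preferred_imp_stable:
  assumes "preferred_ext R A ctr S"
  shows "stable_ext R A ctr S"
proof -
  have cl: "closed_set R A S" and co: "complete_ext R A ctr S"
    and max: "\<not> (\<exists>S'. closed_set R A S' \<and> complete_ext R A ctr S' \<and> S \<subset> S')"
    using assms unfolding preferred_ext_def by blast+
  obtain S' where S': "stable_ext R A ctr S'" "S \<subseteq> S'"
    using complete_extends_to_stable[OF cl co] .
  then have "closed_set R A S'" "complete_ext R A ctr S'"
    using stable_imp_complete unfolding stable_ext_def by blast+
  then have "S = S'" using S'(2) max by blast
  then show ?thesis using S'(1) by simp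
qed

lemma arr_body_subset_imp_d_connected:
  assumes adm: "admissible R A ctr S" and T: "active_collider_tree V T p u v W" "arr_body T \<subseteq> S"
  shows "\<not> d_separated (graph_of V S) u v W"
proof -
  have "T \<subseteq> graph_of V S"
    using T(2) active_collider_tree_dag(1)[OF T(1)] by (auto simp: arr_body_def graph_of_def)
  moreover have "graph_of V S \<subseteq> V \<times> V" by (auto simp: graph_of_def)
  ultimately show ?thesis
    using d_connected_iff_active_collider_tree[OF acyclic_graph_of[OF adm], THEN iffD2] T(1) by blast
qed

lemma admissible_Indep_imp_d_separated:
  assumes adm: "admissible R A ctr S" and ab: "a \<in> V" "b \<in> V" "a \<noteq> b" "X \<subseteq> V - {a, b}"
    and I: "Indep {a, b} X \<in> S"
  shows "d_separated (graph_of V S) a b X"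
proof (rule ccontr)
  assume connected: "\<not> d_separated (graph_of V S) a b X"
  have "graph_of V S \<subseteq> V \<times> V" by (auto simp: graph_of_def)
  then obtain T p where T: "T \<subseteq> graph_of V S" "active_collider_tree V T p a b X"
    using d_connected_iff_active_collider_tree[OF acyclic_graph_of[OF adm], THEN iffD1, OF _ connected]
    by blast
  have "derives R A (arr_body T) (ctr (Indep {a, b} X))"
    using derives_from_tree[OF rule_Indep_contrary[OF ab T(2)] T(2)] by simp
  moreover have "arr_body T \<subseteq> S" using T(1) by (auto simp: graph_of_def arr_body_def)
  ultimately have "attacks R A ctr S S" using attacksI[of "arr_body T" S "Indep {a, b} X" S] I by simp
  then show False using adm unfolding admissible_def conflict_free_def by blast
qed

lemma stable_d_separated_imp_Indep:
  assumes st: "stable_ext R A ctr S" and ab: "a \<in> V" "b \<in> V" "a \<noteq> b" "X \<subseteq> V - {a, b}"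
    and ds: "d_separated (graph_of V S) a b X"
  shows "Indep {a, b} X \<in> S"
proof (rule ccontr)
  have adm: "admissible R A ctr S" and cl: "closed_set R A S"
    and out: "\<forall>a\<in>A - S. attacks R A ctr S {a}"
    using st unfolding stable_ext_def by blast+
  assume nI: "Indep {a, b} X \<notin> S"
  then have "attacks R A ctr S {Indep {a, b} X}" using out Indep_in_asm[OF ab] by blast
  then obtain S' where S': "S' \<subseteq> S" "derives R A S' (Ctr (Indep {a, b} X))"
    unfolding attacks_def by auto
  from derives_Ctr_Indep[OF S'(2)] show False
  proof (elim disjE exE conjE)
    assume ab_xy: "{a, b} = {x, y}" and "X = Z"
    then have "Indep {x, y} Z \<notin> S" using nI by simp
    then obtain p where "vpath V p x y" "Bp p Z \<notin> S" by (rule closed_misses_Bp[OF cl])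
    then have "attacks R A ctr S {Bp p Z}" using out Bp_in_asm by blast
    then obtain S'' where "S'' \<subseteq> S" "derives R A S'' (Ap p Z)" unfolding attacks_def by auto
    then obtain T where "active_collider_tree V T p x y Z" "arr_body T \<subseteq> S"
      using derives_Ap by blast
    then have "\<not> d_separated (graph_of V S) x y Z" by (rule arr_body_subset_imp_d_connected[OF adm])
    then show False using ds ab_xy \<open>X = Z\<close> d_separated_doubleton[of x y a b] by simp
  next
    fix u v T p
    assume uv: "{a, b} = {u, v}" and T: "active_collider_tree V T p u v X" "S' = arr_body T"
    then have "\<not> d_separated (graph_of V S) u v X"
      using arr_body_subset_imp_d_connected[OF adm T(1)] S'(1) by simp
    then show False using ds uv d_separated_doubleton[of u v a b] by simp
  qed
qed

end

theorem proposition5: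
  fixes V :: "'v set" and x y a b :: 'v and Z X :: "'v set" and \<sigma> :: semantics
    and S :: "'v sent set"
  assumes "finite V"
    and "x \<in> V" "y \<in> V" "a \<in> V" "b \<in> V" "x \<noteq> y" "a \<noteq> b"
    and "Z \<subseteq> V - {x, y}" "X \<subseteq> V - {a, b}"
    and "S \<in> extensions \<sigma> (rules_csl V x y Z) (asm_csl V) ctr"
  shows "Indep {a, b} X \<in> S \<longleftrightarrow> d_separated (graph_of V S) a b X"
proof -
  interpret causal_aba V x y Z
    using assms(1,2,3,6,8) by unfold_locales
  have st: "stable_ext R A ctr S"
    using assms(10) preferred_imp_stable by (cases \<sigma>) (auto simp: extensions_def)
  then have "admissible R A ctr S" unfolding stable_ext_def by blast
  then show ?thesis
    using admissible_Indep_imp_d_separated stable_d_separated_imp_Indep[OF st] assms(4,5,7,9)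
    by blast
qed

end
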